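(* Let $w=i_n\cdots i_1$ be a reverse lattice word and $\sigma=\mathrm{std}(w)$. Then the column reading word of $T_w$ equals $\sigma^{-1}$ (in one-line notation).
   Context: A word $w=i_n\cdots i_1$ of positive integers is reverse lattice if in every suffix $i_k\cdots i_1$ the number of $j$'s is at least the number of $(j+1)$'s for every $j\geq1$. $\mathrm{std}(w)$: replace the letters of $w$ (read left to right) by $1,\ldots,n$, smaller letters receiving smaller values, equal letters receiving increasing values from left to right; the result is a permutation in one-line notation. Partitions in French convention (rows numbered bottom to top). For a reverse lattice word, define partitions $\lambda_0=\varnothing$ and, for $k=1,\ldots,n$, $\lambda_k$ obtained from $\lambda_{k-1}$ by adding a box at its addable node in column $i_k$; $T_w$ is the standard reverse tableau of shape $\lambda_n$ in which the box of $\lambda_k$ not in $\lambda_{k-1}$ contains $n-k+1$. The column reading word of a tableau lists the entries of each column in increasing order, columns from left to right. *)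

theory Defs
  imports Main
begin

text \<open>A word w = i_n ... i_1 is represented by the list [i_n, ..., i_1]
  (read left to right), so the letter i_k is w ! (length w - k).\<close>

definition reverse_lattice :: "nat list \<Rightarrow> bool" where
  "reverse_lattice w \<longleftrightarrow> (\<forall>x\<in>set w. 1 \<le> x) \<and>
     (\<forall>k\<le>length w. \<forall>j\<ge>1. count_list (drop k w) (Suc j) \<le> count_list (drop k w) j)"

definition std :: "nat list \<Rightarrow> nat list" where
  "std w = map (\<lambda>p. Suc (card {q. q < length w \<and> (w ! q < w ! p \<or> (w ! q = w ! p \<and> q < p))}))
              [0..<length w]"

definition perm_inv :: "nat list \<Rightarrow> nat list" where
  "perm_inv s = map (\<lambda>r. Suc (THE q. q < length s \<and> s ! q = Suc r)) [0..<length s]"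

text \<open>Tableaux as partial maps from (row, column) (1-indexed, French convention,
  rows numbered bottom to top) to entries.\<close>
type_synonym tableau = "nat \<times> nat \<Rightarrow> nat option"

definition col_height :: "tableau \<Rightarrow> nat \<Rightarrow> nat" where
  "col_height T c = card {r. T (r, c) \<noteq> None}"

text \<open>add_boxes n k cs T: the letters cs = [i_k, i_(k+1), ...] are processed in turn;
  at step k a box is added at the addable node of column i_k (on top of that column),
  containing n - k + 1.\<close>
fun add_boxes :: "nat \<Rightarrow> nat \<Rightarrow> nat list \<Rightarrow> tableau \<Rightarrow> tableau" where
  "add_boxes n k [] T = T"
| "add_boxes n k (c # cs) T =
     add_boxes n (Suc k) cs (T((Suc (col_height T c), c) := Some (n - k + 1)))"

definition tableau_of :: "nat list \<Rightarrow> tableau" where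
  "tableau_of w = add_boxes (length w) 1 (rev w) (\<lambda>_. None)"

definition col_reading_word :: "tableau \<Rightarrow> nat list" where
  "col_reading_word T =
     concat (map (\<lambda>c. sorted_list_of_set {x. \<exists>r. T (r, c) = Some x})
                 (sorted_list_of_set {c. \<exists>r. T (r, c) \<noteq> None}))"

end

theory Submission
  imports Defs
begin

text \<open>Column c of T_w receives the entry n - k + 1 exactly when i_k = c, i.e. (indexing the
  list w from 0) the entries of column c are p + 1 for the positions p with w ! p = c. Reading
  the columns from left to right, each in increasing order, therefore lists the positions of w
  ordered by letter and then by position; this is the order in which standardization assigns
  the values 1, ..., n, so the reading word is the inverse of std w.\<close>

lemma sorted_list_of_set_image_strict_mono:
  fixes f :: "'a::linorder \<Rightarrow> 'b::linorder"
  assumes "strict_mono f" and "finite A"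
  shows "sorted_list_of_set (f ` A) = map f (sorted_list_of_set A)"
  by (rule strict_sorted_equal)
    (use assms in \<open>auto simp: sorted_wrt_map strict_mono_less\<close>)

lemma sorted_wrt_concat_map:
  assumes "sorted_wrt Q ks"
    and "\<And>k. k \<in> set ks \<Longrightarrow> sorted_wrt R (f k)"
    and "\<And>k k' x y. Q k k' \<Longrightarrow> x \<in> set (f k) \<Longrightarrow> y \<in> set (f k') \<Longrightarrow> R x y"
  shows "sorted_wrt R (concat (map f ks))"
  using assms by (induction ks) (auto simp: sorted_wrt_append)

lemma sorted_wrt_irrefl_distinct:
  assumes "sorted_wrt R xs" and "\<And>x. \<not> R x x"
  shows "distinct xs"
  using assms by (induction xs) auto

lemma card_sorted_wrt_predecessors:
  assumes sorted: "sorted_wrt R xs" and asym: "\<And>x y. R x y \<Longrightarrow> \<not> R y x"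
    and "i < length xs"
  shows "card {x \<in> set xs. R x (xs ! i)} = i"
proof -
  have before_i: "R (xs ! j) (xs ! i) \<longleftrightarrow> j < i" if "j < length xs" for j
    using that \<open>i < length xs\<close> sorted_wrt_nth_less[OF sorted] asym
    by (metis linorder_neqE_nat)
  have predecessor_indices: "{j \<in> {0..<length xs}. R (xs ! j) (xs ! i)} = {0..<i}"
    using \<open>i < length xs\<close> before_i by auto
  have "{x \<in> set xs. R x (xs ! i)} = nth xs ` {j \<in> {0..<length xs}. R (xs ! j) (xs ! i)}"
    by (subst (1) nth_image[of "length xs" xs, simplified, symmetric]) blast
  also have "\<dots> = set (take i xs)"
    unfolding predecessor_indices using \<open>i < length xs\<close> by (simp add: nth_image)
  finally have "{x \<in> set xs. R x (xs ! i)} = set (take i xs)" .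
  moreover have "distinct xs"
    using sorted_wrt_irrefl_distinct[OF sorted] asym by blast
  ultimately show ?thesis
    using \<open>i < length xs\<close> by (simp add: distinct_card)
qed

definition column_entries :: "tableau \<Rightarrow> nat \<Rightarrow> nat set" where
  "column_entries T c = {x. \<exists>r. T (r, c) = Some x}"

definition columns_contiguous :: "tableau \<Rightarrow> bool" where
  "columns_contiguous T \<longleftrightarrow> (\<forall>c. {r. T (r, c) \<noteq> None} = {1..col_height T c})"

lemma columns_contiguous_empty: "columns_contiguous (\<lambda>_. None)"
  by (simp add: columns_contiguous_def col_height_def)

lemma columns_contiguous_top_free:
  assumes "columns_contiguous T"
  shows "T (Suc (col_height T c), c) = None"
proof -
  have "Suc (col_height T c) \<notin> {r. T (r, c) \<noteq> None}"
    using assms by (simp add: columns_contiguous_def)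
  then show ?thesis by simp
qed

lemma columns_contiguous_put_on_top:
  assumes "columns_contiguous T"
  shows "columns_contiguous (T((Suc (col_height T c), c) := Some x))"
    (is "columns_contiguous ?T")
  unfolding columns_contiguous_def
proof
  fix c'
  show "{r. ?T (r, c') \<noteq> None} = {1..col_height ?T c'}"
  proof (cases "c' = c")
    case True
    have "{r. ?T (r, c') \<noteq> None} = insert (Suc (col_height T c)) {r. T (r, c) \<noteq> None}"
      using True by auto
    also have "\<dots> = {1..Suc (col_height T c)}"
      using assms by (auto simp: columns_contiguous_def)
    finally show ?thesis by (simp add: col_height_def)
  next
    case False
    then show ?thesis using assms by (simp add: columns_contiguous_def col_height_def)
  qed
qed

lemma column_entries_put_on_top:
  assumes "columns_contiguous T"
  shows "column_entries (T((Suc (col_height T c), c) := Some x)) c' =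
           column_entries T c' \<union> (if c' = c then {x} else {})"
  using columns_contiguous_top_free[OF assms, of c]
  by (auto simp: column_entries_def) (metis option.distinct(1))

lemma columns_contiguous_add_boxes:
  "columns_contiguous T \<Longrightarrow> columns_contiguous (add_boxes n k cs T)"
  by (induction cs arbitrary: k T) (simp_all add: columns_contiguous_put_on_top)

lemma column_entries_add_boxes:
  assumes "columns_contiguous T"
  shows "column_entries (add_boxes n k cs T) c =
           column_entries T c \<union> (\<lambda>j. n - (k + j) + 1) ` {j. j < length cs \<and> cs ! j = c}"
  using assms
proof (induction cs arbitrary: k T)
  case Nil
  then show ?case by simp
next
  case (Cons c0 cs)
  have positions: "{j. j < length (c0 # cs) \<and> (c0 # cs) ! j = c} =
      (if c0 = c then {0} else {}) \<union> Suc ` {j. j < length cs \<and> cs ! j = c}"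
  proof (rule set_eqI)
    fix j
    show "j \<in> {j. j < length (c0 # cs) \<and> (c0 # cs) ! j = c} \<longleftrightarrow>
        j \<in> (if c0 = c then {0} else {}) \<union> Suc ` {j. j < length cs \<and> cs ! j = c}"
      by (cases j) auto
  qed
  define T' where "T' = T((Suc (col_height T c0), c0) := Some (n - k + 1))"
  have "column_entries (add_boxes n k (c0 # cs) T) c =
      column_entries T' c \<union> (\<lambda>j. n - (Suc k + j) + 1) ` {j. j < length cs \<and> cs ! j = c}"
    unfolding add_boxes.simps T'_def by (rule Cons.IH[OF columns_contiguous_put_on_top[OF Cons.prems]])
  also have "\<dots> = column_entries T c \<union>
      (\<lambda>j. n - (k + j) + 1) ` {j. j < length (c0 # cs) \<and> (c0 # cs) ! j = c}"
    unfolding T'_def column_entries_put_on_top[OF Cons.prems] positions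
    by (auto simp: image_Un image_image)
  finally show ?case .
qed

lemma column_entries_tableau_of:
  "column_entries (tableau_of w) c = Suc ` {p. p < length w \<and> w ! p = c}"
proof -
  have "column_entries (tableau_of w) c =
      (\<lambda>j. length w - (1 + j) + 1) ` {j. j < length w \<and> rev w ! j = c}"
    using column_entries_add_boxes[OF columns_contiguous_empty, of "length w" 1 "rev w" c]
    by (simp add: tableau_of_def column_entries_def)
  also have "\<dots> = (\<lambda>j. length w - j) ` {j. j < length w \<and> rev w ! j = c}"
    by (rule image_cong) auto
  also have "\<dots> = (\<lambda>j. length w - j) ` (\<lambda>p. length w - Suc p) ` {p. p < length w \<and> w ! p = c}"
  proof (rule arg_cong[where f = "image _"], rule set_eqI)
    fix j
    show "j \<in> {j. j < length w \<and> rev w ! j = c} \<longleftrightarrow>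
        j \<in> (\<lambda>p. length w - Suc p) ` {p. p < length w \<and> w ! p = c}"
      by (auto simp: rev_nth image_iff intro!: exI[of _ "length w - Suc j"])
  qed
  also have "\<dots> = Suc ` {p. p < length w \<and> w ! p = c}"
    by (auto simp: image_image intro!: image_cong)
  finally show ?thesis .
qed

lemma columns_tableau_of: "{c. \<exists>r. tableau_of w (r, c) \<noteq> None} = set w"
proof -
  have "{c. \<exists>r. tableau_of w (r, c) \<noteq> None} = {c. column_entries (tableau_of w) c \<noteq> {}}"
    by (auto simp: column_entries_def)
  also have "\<dots> = set w"
    by (auto simp: column_entries_tableau_of in_set_conv_nth)
  finally show ?thesis .
qed

definition positions_by_letter :: "nat list \<Rightarrow> nat list" where
  "positions_by_letter w =
     concat (map (\<lambda>c. sorted_list_of_set {p. p < length w \<and> w ! p = c}) (sorted_list_of_set (set w)))"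

lemma col_reading_word_tableau_of:
  "col_reading_word (tableau_of w) = map Suc (positions_by_letter w)"
  unfolding col_reading_word_def columns_tableau_of
    column_entries_tableau_of[unfolded column_entries_def]
  by (simp add: positions_by_letter_def
      sorted_list_of_set_image_strict_mono strict_mono_Suc_iff map_concat comp_def)

lemma perm_inv_eqI:
  assumes set_xs: "set xs = {..<length s}" and len: "length xs = length s"
    and inverse: "\<And>r. r < length s \<Longrightarrow> s ! (xs ! r) = Suc r"
  shows "perm_inv s = map Suc xs"
proof (rule nth_equalityI)
  fix r assume "r < length (perm_inv s)"
  then have r: "r < length s" by (simp add: perm_inv_def)
  have "(THE q. q < length s \<and> s ! q = Suc r) = xs ! r"
  proof (rule the_equality)
    show "xs ! r < length s \<and> s ! (xs ! r) = Suc r"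
      using r len set_xs nth_mem[of r xs] inverse by auto
  next
    fix q assume q: "q < length s \<and> s ! q = Suc r"
    then obtain i where "i < length s" "xs ! i = q"
      using set_xs len by (metis in_set_conv_nth lessThan_iff)
    then show "q = xs ! r" using q inverse by force
  qed
  then show "perm_inv s ! r = map Suc xs ! r"
    using r len by (simp add: perm_inv_def)
qed (simp add: perm_inv_def len)

definition std_less :: "nat list \<Rightarrow> nat \<Rightarrow> nat \<Rightarrow> bool" where
  "std_less w p q \<longleftrightarrow> w ! p < w ! q \<or> (w ! p = w ! q \<and> p < q)"

lemma std_less_asym: "std_less w p q \<Longrightarrow> \<not> std_less w q p"
  by (auto simp: std_less_def)

lemma nth_std:
  "p < length w \<Longrightarrow> std w ! p = Suc (card {q. q < length w \<and> std_less w q p})"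
  by (simp add: std_def std_less_def)

lemma perm_inv_std_eq_sorted:
  assumes sorted: "sorted_wrt (std_less w) xs" and set_xs: "set xs = {..<length w}"
  shows "perm_inv (std w) = map Suc xs"
proof (rule perm_inv_eqI)
  have "distinct xs"
    using sorted_wrt_irrefl_distinct[OF sorted] std_less_asym by blast
  then show len: "length xs = length (std w)"
    using distinct_card[of xs] set_xs by (simp add: std_def)
  fix r assume "r < length (std w)"
  then have "r < length xs" using len by simp
  have "{q. q < length w \<and> std_less w q (xs ! r)} = {q \<in> set xs. std_less w q (xs ! r)}"
    using set_xs by auto
  then show "std w ! (xs ! r) = Suc r"
    using card_sorted_wrt_predecessors[OF sorted std_less_asym \<open>r < length xs\<close>]
      nth_std[of "xs ! r" w] nth_mem[OF \<open>r < length xs\<close>] set_xs by auto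
qed (simp_all add: set_xs std_def)

lemma sorted_wrt_positions_by_letter: "sorted_wrt (std_less w) (positions_by_letter w)"
  unfolding positions_by_letter_def
proof (rule sorted_wrt_concat_map[where Q = "(<)"])
  fix c
  show "sorted_wrt (std_less w) (sorted_list_of_set {p. p < length w \<and> w ! p = c})"
    by (rule sorted_wrt_mono_rel[OF _ strict_sorted_list_of_set]) (simp add: std_less_def)
qed (auto simp: std_less_def)

lemma set_positions_by_letter: "set (positions_by_letter w) = {..<length w}"
  by (auto simp: positions_by_letter_def in_set_conv_nth)

theorem lemma8p1:
  fixes w :: "nat list"
  assumes "reverse_lattice w"
  shows "col_reading_word (tableau_of w) = perm_inv (std w)"
  using perm_inv_std_eq_sorted[OF sorted_wrt_positions_by_letter set_positions_by_letter]
  by (simp add: col_reading_word_tableau_of)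

end
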